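(* Suppose $(X_i,Y_i)$, $i=1,\dots,n$, are i.i.d. from $P$ and $(X_{n+1},Y_{n+1})\sim Q$ independently, with $\frac{dQ}{dP}(x,y)=w(x)$ for some $w:\mathcal{X}\to(0,\infty)$; $f$, the risk map $\mathcal{L}(f,x,y)\in[0,1]$ and the score $s:\mathcal{X}\to[0,1]$ are fixed. Let $\{\bar w_n(\cdot)\}$ be a sequence of random weight estimates trained independently of $\{(X_i,Y_i)\}_{i=1}^{n+1}$ with $\|\bar w_n-w\|_{L_2(\mathbb{P}_X)}=o_P(1)$ as $n\to\infty$. Let $l(x)=\mathbb{E}[\mathcal{L}(f,X,Y)\mid X=x]$ and assume $F(t)=\mathbb{E}_P[w(X)l(X)\mathbf{1}\{s(X)\le t\}]/\mathbb{E}_P[w(X)]$ is continuous and strictly increasing at $t^*=\sup\{t:F(t)\le\alpha\}$, where $\alpha\in(0,1)$. Set $\gamma=\alpha$ and let $\mathrm{MDR}_n=\mathbb{E}[L_{n+1}\mathbf{1}\{E_{\gamma,n+1}\ge1/\alpha\}]$, where $E_{\gamma,n+1}$ is the weighted e-value below computed with $\bar w_n$ in place of $w$. Then $\limsup_{n\to\infty}\mathrm{MDR}_n\le\alpha$.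
   Context: With $L_i=\mathcal{L}(f,X_i,Y_i)$, weights $w_i=\bar w_n(X_i)$, $\mathcal{M}=\{s(X_i)\}_{i=1}^{n+1}$: $F(t;\ell)=\frac{\sum_{i=1}^nw_iL_i\mathbf{1}\{s(X_i)\le t\}+w_{n+1}\ell\mathbf{1}\{s(X_{n+1})\le t\}}{\sum_{i=1}^{n+1}w_i}$, $t_\gamma(\ell)=\max\{t\in\mathcal{M}:F(t;\ell)\le\gamma\}$ ($\max\emptyset=-\infty$), and $E_{\gamma,n+1}=\inf_{\ell\in[0,1]}\frac{\mathbf{1}\{s(X_{n+1})\le t_\gamma(\ell)\}\sum_{i=1}^{n+1}w_i}{\sum_{i=1}^nw_iL_i\mathbf{1}\{s(X_i)\le t_\gamma(\ell)\}+w_{n+1}\ell\mathbf{1}\{s(X_{n+1})\le t_\gamma(\ell)\}}$ (ratio $0$ if numerator $0$, $+\infty$ if numerator positive and denominator $0$; $E_{\gamma,n+1}=0$ if $\inf_\ell t_\gamma(\ell)=-\infty$). *)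

theory Defs
  imports "HOL-Probability.Probability"
begin

text \<open>Indexing convention: calibration points are indexed 0..n-1 (paper: 1..n),
  the test point is indexed n (paper: n+1).  w i = weight, L i = loss, S i = score.\<close>

definition Fw :: "nat \<Rightarrow> (nat \<Rightarrow> real) \<Rightarrow> (nat \<Rightarrow> real) \<Rightarrow> (nat \<Rightarrow> real) \<Rightarrow> real \<Rightarrow> real \<Rightarrow> real" where
  "Fw n w L S l t =
     ((\<Sum>i<n. w i * L i * (if S i \<le> t then 1 else 0)) + w n * l * (if S n \<le> t then 1 else 0))
     / (\<Sum>i\<le>n. w i)"

definition tgam :: "nat \<Rightarrow> (nat \<Rightarrow> real) \<Rightarrow> (nat \<Rightarrow> real) \<Rightarrow> (nat \<Rightarrow> real) \<Rightarrow> real \<Rightarrow> real \<Rightarrow> ereal" where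
  "tgam n w L S \<gamma> l =
     (let A = {t \<in> S ` {..n}. Fw n w L S l t \<le> \<gamma>} in if A = {} then -\<infinity> else ereal (Max A))"

definition eratio :: "nat \<Rightarrow> (nat \<Rightarrow> real) \<Rightarrow> (nat \<Rightarrow> real) \<Rightarrow> (nat \<Rightarrow> real) \<Rightarrow> real \<Rightarrow> real \<Rightarrow> ereal" where
  "eratio n w L S \<gamma> l =
     (let T = tgam n w L S \<gamma> l;
          num = (if ereal (S n) \<le> T then 1 else 0) * (\<Sum>i\<le>n. w i);
          den = (\<Sum>i<n. w i * L i * (if ereal (S i) \<le> T then 1 else 0))
                + w n * l * (if ereal (S n) \<le> T then 1 else 0)
      in if num = 0 then 0 else if den = 0 then \<infinity> else ereal (num / den))"

definition evalue :: "nat \<Rightarrow> (nat \<Rightarrow> real) \<Rightarrow> (nat \<Rightarrow> real) \<Rightarrow> (nat \<Rightarrow> real) \<Rightarrow> real \<Rightarrow> ereal" where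
  "evalue n w L S \<gamma> =
     (if (INF l\<in>{0..1}. tgam n w L S \<gamma> l) = -\<infinity> then 0
      else (INF l\<in>{0..1}. eratio n w L S \<gamma> l))"

end

theory Submission
  imports Defs "HOL-Real_Asymp.Real_Asymp"
begin

text \<open>
  A positive e-value already forces, through the loss value \<open>l = 1\<close> of the test point, the test score
  to lie below \<open>t\<^sub>\<gamma>(1)\<close>; so at every threshold \<open>t\<close> up to the test score the weighted calibration
  risk is at most \<open>\<alpha>\<close> times the total weight. Fix \<open>t\<close> with \<open>F t > \<alpha>\<close>. Either the test score is
  below \<open>t\<close>, which costs at most \<open>F t\<close> in expected loss under \<open>Q\<close>, or the weighted calibration risk
  at \<open>t\<close> is at most \<open>\<alpha>\<close> although its population value \<open>F t\<close> exceeds \<open>\<alpha>\<close>. The second event has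
  vanishing probability: with the weights clipped at \<open>K\<close>, Hoeffding's inequality controls the
  clipped calibration risk, Markov's inequality controls the weight above \<open>K\<close> together with the
  \<open>L\<^sub>1\<close> error of the estimated weights, and the \<open>L\<^sub>2\<close> consistency of the estimate keeps the test
  weight small compared to \<open>n\<close>. Hence \<open>limsup MDR \<le> F t\<close>, and continuity of \<open>F\<close> at \<open>t\<^sup>*\<close> lets
  \<open>F t\<close> approach \<open>\<alpha>\<close> from above.
\<close>

lemma Fw_le_if_ereal_le_tgam:
  assumes "ereal u \<le> tgam n W L S \<gamma> l"
  obtains t where "u \<le> t" "Fw n W L S l t \<le> \<gamma>"
proof -
  define A where "A = {t \<in> S ` {..n}. Fw n W L S l t \<le> \<gamma>}"
  have "A \<noteq> {}"
    using assms by (auto simp: tgam_def A_def Let_def split: if_splits)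
  moreover have "finite A"
    by (simp add: A_def)
  ultimately have "tgam n W L S \<gamma> l = ereal (Max A)" "Max A \<in> A"
    by (simp_all add: tgam_def A_def[symmetric] Let_def)
  with assms that show thesis
    by (auto simp: A_def)
qed

lemma evalue_pos_imp_weighted_risk_le:
  fixes W L S :: "nat \<Rightarrow> real"
  assumes W: "\<And>i. i \<le> n \<Longrightarrow> 0 \<le> W i" and L: "\<And>i. i < n \<Longrightarrow> 0 \<le> L i"
    and pos: "evalue n W L S \<gamma> > 0" and t: "t \<le> S n"
  shows "(\<Sum>i<n. W i * L i * (if S i \<le> t then 1 else 0)) \<le> \<gamma> * (\<Sum>i\<le>n. W i)"
proof -
  have "evalue n W L S \<gamma> = (INF l\<in>{0..1}. eratio n W L S \<gamma> l)"
    using pos by (auto simp: evalue_def split: if_splits)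
  also have "\<dots> \<le> eratio n W L S \<gamma> 1"
    by (rule INF_lower) simp
  finally have "ereal (S n) \<le> tgam n W L S \<gamma> 1"
    using pos by (auto simp: eratio_def Let_def split: if_splits)
  then obtain t0 where t0: "S n \<le> t0" "Fw n W L S 1 t0 \<le> \<gamma>"
    by (rule Fw_le_if_ereal_le_tgam)
  define N where "N = (\<Sum>i<n. W i * L i * (if S i \<le> t0 then 1 else 0)) + W n"
  have "(\<Sum>i<n. W i * L i * (if S i \<le> t then 1 else 0)) \<le> (\<Sum>i<n. W i * L i * (if S i \<le> t0 then 1 else 0))"
    using W L t t0(1) by (intro sum_mono) auto
  also have "\<dots> \<le> N"
    using W[of n] by (simp add: N_def)
  also have "N \<le> \<gamma> * (\<Sum>i\<le>n. W i)"
  proof (cases "(\<Sum>i\<le>n. W i) = 0")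
    case True
    then have "\<forall>i\<le>n. W i = 0"
      using W by (subst (asm) sum_nonneg_eq_0_iff) auto
    then show ?thesis
      by (simp add: N_def True)
  next
    case False
    moreover have "0 \<le> (\<Sum>i\<le>n. W i)"
      using W by (intro sum_nonneg) auto
    ultimately have "(\<Sum>i\<le>n. W i) > 0"
      by simp
    moreover have "Fw n W L S 1 t0 = N / (\<Sum>i\<le>n. W i)"
      using t0(1) by (simp add: Fw_def N_def)
    ultimately show ?thesis
      using t0(2) by (simp add: divide_le_eq mult.commute)
  qed
  finally show ?thesis .
qed

lemma exists_value_above_level_near:
  fixes F :: "real \<Rightarrow> real" and a e :: real
  defines "A \<equiv> {t. F t \<le> a}"
  assumes bdd: "bdd_above A" and ne: "A \<noteq> {}" and cont: "isCont F (Sup A)" and e: "e > 0"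
  obtains t where "a < F t" "F t < a + e"
proof -
  let ?s = "Sup A"
  have near: "\<exists>d>0. \<forall>t. \<bar>t - ?s\<bar> < d \<longrightarrow> \<bar>F t - F ?s\<bar> < r" if "r > 0" for r
    using cont that unfolding continuous_at_eps_delta by (simp add: dist_real_def)
  have above: "a < F t" if "?s < t" for t
    using cSup_upper[OF _ bdd, of t] that by (force simp: A_def)
  have "F ?s \<le> a"
  proof (rule ccontr)
    assume "\<not> F ?s \<le> a"
    then obtain d where d: "d > 0" and dF: "\<And>t. \<bar>t - ?s\<bar> < d \<Longrightarrow> \<bar>F t - F ?s\<bar> < F ?s - a"
      using near[of "F ?s - a"] by auto
    obtain x where x: "x \<in> A" "?s - d < x"
      using less_cSupD[OF ne, of "?s - d"] d by auto
    have "x \<le> ?s"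
      using cSup_upper[OF x(1) bdd] .
    then have "\<bar>F x - F ?s\<bar> < F ?s - a"
      using x(2) by (intro dF) simp
    with x(1) show False
      by (auto simp: A_def)
  qed
  moreover obtain d where d: "d > 0" and dF: "\<And>t. \<bar>t - ?s\<bar> < d \<Longrightarrow> \<bar>F t - F ?s\<bar> < e"
    using near[OF e] by auto
  ultimately show thesis
    using that[of "?s + d / 2"] above[of "?s + d / 2"] dF[of "?s + d / 2"] by simp
qed

lemma emeasure_le_emeasure_compl_plus_nn_integral:
  assumes A: "A \<in> sets M" and G: "G \<in> sets M" and f: "\<And>x. x \<in> A \<Longrightarrow> x \<in> G \<Longrightarrow> 1 \<le> f x"
  shows "emeasure M A \<le> emeasure M (space M - G) + (\<integral>\<^sup>+x. f x * indicator G x \<partial>M)"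
proof -
  have "emeasure M A \<le> emeasure M ((space M - G) \<union> (A \<inter> G))"
    using A G sets.sets_into_space[OF A] by (intro emeasure_mono) auto
  also have "\<dots> \<le> emeasure M (space M - G) + emeasure M (A \<inter> G)"
    using A G by (intro emeasure_subadditive) auto
  also have "emeasure M (A \<inter> G) = (\<integral>\<^sup>+x. indicator (A \<inter> G) x \<partial>M)"
    using A G by simp
  also have "\<dots> \<le> (\<integral>\<^sup>+x. f x * indicator G x \<partial>M)"
    using f by (intro nn_integral_mono) (auto simp: indicator_def)
  finally show ?thesis
    by (simp add: add_left_mono)
qed

lemma emeasure_sum_ge_le_compl_plus_nn_integral:
  fixes e :: "'i \<Rightarrow> 'a \<Rightarrow> real"
  assumes c: "c > 0" and G: "G \<in> sets M"
    and e_meas: "\<And>i. i \<in> I \<Longrightarrow> e i \<in> borel_measurable M"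
    and e_nonneg: "\<And>i x. i \<in> I \<Longrightarrow> x \<in> space M \<Longrightarrow> 0 \<le> e i x"
  shows "emeasure M {x \<in> space M. c \<le> (\<Sum>i\<in>I. e i x)}
           \<le> emeasure M (space M - G) + ennreal (1 / c) * (\<Sum>i\<in>I. \<integral>\<^sup>+x. ennreal (e i x) * indicator G x \<partial>M)"
proof -
  have [measurable]: "(\<lambda>x. \<Sum>i\<in>I. e i x) \<in> borel_measurable M"
    using e_meas by (rule borel_measurable_sum)
  have summand_meas: "(\<lambda>x. ennreal (e i x) * indicator G x) \<in> borel_measurable M" if "i \<in> I" for i
    using e_meas[OF that] G by measurable
  have "emeasure M {x \<in> space M. c \<le> (\<Sum>i\<in>I. e i x)}
      \<le> emeasure M (space M - G) + (\<integral>\<^sup>+x. (ennreal (1 / c) * (\<Sum>i\<in>I. ennreal (e i x))) * indicator G x \<partial>M)"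
  proof (rule emeasure_le_emeasure_compl_plus_nn_integral)
    fix x assume x: "x \<in> {x \<in> space M. c \<le> (\<Sum>i\<in>I. e i x)}"
    have "1 \<le> 1 / c * (\<Sum>i\<in>I. e i x)"
      using x c by (simp add: field_simps)
    then have "1 \<le> ennreal (1 / c * (\<Sum>i\<in>I. e i x))"
      by (metis ennreal_1 ennreal_leI)
    also have "\<dots> = ennreal (1 / c) * ennreal (\<Sum>i\<in>I. e i x)"
      using c by (intro ennreal_mult') simp
    also have "ennreal (\<Sum>i\<in>I. e i x) = (\<Sum>i\<in>I. ennreal (e i x))"
      using x e_nonneg by (intro sum_ennreal[symmetric]) auto
    finally show "1 \<le> ennreal (1 / c) * (\<Sum>i\<in>I. ennreal (e i x))" .
  qed (use G in measurable)
  also have "(\<integral>\<^sup>+x. (ennreal (1 / c) * (\<Sum>i\<in>I. ennreal (e i x))) * indicator G x \<partial>M)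
      = (\<integral>\<^sup>+x. ennreal (1 / c) * (\<Sum>i\<in>I. ennreal (e i x) * indicator G x) \<partial>M)"
    by (simp add: mult.assoc sum_distrib_right)
  also have "\<dots> = ennreal (1 / c) * (\<integral>\<^sup>+x. (\<Sum>i\<in>I. ennreal (e i x) * indicator G x) \<partial>M)"
    using summand_meas by (intro nn_integral_cmult borel_measurable_sum) simp
  also have "\<dots> = ennreal (1 / c) * (\<Sum>i\<in>I. \<integral>\<^sup>+x. ennreal (e i x) * indicator G x \<partial>M)"
    using summand_meas by (intro arg_cong[where f = "\<lambda>y. ennreal (1 / c) * y"] nn_integral_sum) simp
  finally show ?thesis .
qed

lemma indep_vars_PiM_components:
  fixes M :: "'i \<Rightarrow> 'a measure"
  assumes M: "\<And>i. prob_space (M i)" and I: "finite I" and J: "J \<subseteq> I" "J \<noteq> {}"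
  shows "prob_space.indep_vars (PiM I M) M (\<lambda>i Z. Z i) J"
proof -
  interpret PM: prob_space "PiM I M"
    by (intro prob_space_PiM M)
  have component: "distr (PiM I M) (M i) (\<lambda>Z. Z i) = M i" if "i \<in> J" for i
    using that J by (intro distr_PiM_component M) auto
  show ?thesis
  proof (subst PM.indep_vars_iff_distr_eq_PiM')
    show "(\<lambda>Z. Z i) \<in> measurable (PiM I M) (M i)" if "i \<in> J" for i
      using that J by (intro measurable_component_singleton) auto
    have "distr (PiM I M) (PiM J M) (\<lambda>Z. \<lambda>i\<in>J. Z i) = PiM J M"
      using J I by (intro product_prob_space.distr_restrict[symmetric] product_prob_spaceI M)
    also have "\<dots> = PiM J (\<lambda>i. distr (PiM I M) (M i) (\<lambda>Z. Z i))"
      using component by (intro PiM_cong) auto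
    finally show "distr (PiM I M) (PiM J M) (\<lambda>Z. \<lambda>i\<in>J. Z i) = PiM J (\<lambda>i. distr (PiM I M) (M i) (\<lambda>Z. Z i))" .
  qed (use J in auto)
qed

lemma Hoeffding_PiM_sum_le:
  fixes M :: "'i \<Rightarrow> 'a measure" and g :: "'a \<Rightarrow> real" and a b \<epsilon> :: real
  assumes M: "\<And>i. prob_space (M i)" and I: "finite I" and J: "J \<subseteq> I" "J \<noteq> {}"
    and MJ: "\<And>i. i \<in> J \<Longrightarrow> M i = N"
    and g[measurable]: "g \<in> borel_measurable N" and g_range: "\<And>z. z \<in> space N \<Longrightarrow> g z \<in> {a..b}"
    and ab: "a < b" and \<epsilon>: "\<epsilon> \<ge> 0"
  shows "emeasure (PiM I M) {Z \<in> space (PiM I M). (\<Sum>i\<in>J. g (Z i)) \<le> real (card J) * (\<integral>z. g z \<partial>N) - \<epsilon>}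
           \<le> ennreal (exp (-2 * \<epsilon>\<^sup>2 / (real (card J) * (b - a)\<^sup>2)))"
proof -
  interpret PM: prob_space "PiM I M"
    by (intro prob_space_PiM M)
  have JI: "i \<in> J \<Longrightarrow> i \<in> I" for i
    using J by auto
  have fin: "finite J"
    using J(1) I by (rule finite_subset)
  have indep: "PM.indep_vars (\<lambda>_. borel) (\<lambda>i Z. g (Z i)) J"
    by (rule PM.indep_vars_compose2[OF indep_vars_PiM_components[OF M I J]]) (simp add: MJ)
  have expectation: "PM.expectation (\<lambda>Z. g (Z i)) = (\<integral>z. g z \<partial>N)" if "i \<in> J" for i
  proof -
    have Mi: "M i = N"
      using that by (rule MJ)
    have "PM.expectation (\<lambda>Z. g (Z i)) = integral\<^sup>L (distr (PiM I M) (M i) (\<lambda>Z. Z i)) g"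
      using that JI g by (intro integral_distr[symmetric]) (auto simp: Mi[symmetric])
    also have "distr (PiM I M) (M i) (\<lambda>Z. Z i) = N"
      using that JI by (simp add: distr_PiM_component M Mi[symmetric])
    finally show ?thesis .
  qed
  interpret Hoeffding_ineq "PiM I M" J "\<lambda>i Z. g (Z i)" "\<lambda>_. a" "\<lambda>_. b"
      "\<Sum>i\<in>J. PM.expectation (\<lambda>Z. g (Z i))"
  proof unfold_locales
    show "AE Z in PiM I M. g (Z i) \<in> {a..b}" if "i \<in> J" for i
      using that JI MJ by (intro AE_I2 g_range) (auto simp: space_PiM)
  qed (use fin indep in auto)
  have "(\<Sum>i\<in>J. (b - a)\<^sup>2) > 0"
    using ab fin J(2) by (simp add: card_gt_0_iff)
  from Hoeffding_ineq_le[OF \<epsilon> this] show ?thesis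
    using expectation by (simp add: PM.emeasure_eq_measure)
qed

lemma abs_mult_sub_min_mult_le:
  fixes v K c :: real
  assumes "\<bar>c\<bar> \<le> 1" "0 \<le> v" "0 \<le> K"
  shows "\<bar>v * c - min v K * c\<bar> \<le> (if K < v then v else 0)"
proof -
  have "\<bar>v * c - min v K * c\<bar> = \<bar>v - min v K\<bar> * \<bar>c\<bar>"
    by (simp add: abs_mult flip: left_diff_distrib)
  also have "\<dots> \<le> \<bar>v - min v K\<bar>"
    using assms(1) by (simp add: mult_left_le)
  also have "\<dots> \<le> (if K < v then v else 0)"
    using assms(2,3) by (auto simp: min_def)
  finally show ?thesis .
qed

locale covariate_shift =
  fixes Mx :: "'x measure" and My :: "'y measure"
    and P Q :: "('x \<times> 'y) measure"
    and w :: "'x \<Rightarrow> real" and s :: "'x \<Rightarrow> real" and Lf :: "'x \<times> 'y \<Rightarrow> real"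
    and \<Omega> :: "nat \<Rightarrow> 'o measure" and Wbar :: "nat \<Rightarrow> 'o \<Rightarrow> 'x \<Rightarrow> real"
    and \<alpha> :: real
  assumes P_prob: "prob_space P"
    and P_sets: "sets P = sets (Mx \<Otimes>\<^sub>M My)"
    and w_meas[measurable]: "w \<in> borel_measurable Mx"
    and w_pos: "\<And>x. x \<in> space Mx \<Longrightarrow> w x > 0"
    and Q_def: "Q = density P (\<lambda>z. ennreal (w (fst z)))"
    and Q_prob: "prob_space Q"
    and Lf_meas: "Lf \<in> borel_measurable (Mx \<Otimes>\<^sub>M My)"
    and Lf_range: "\<And>z. z \<in> space (Mx \<Otimes>\<^sub>M My) \<Longrightarrow> Lf z \<in> {0..1}"
    and s_meas[measurable]: "s \<in> borel_measurable Mx"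
    and \<Omega>_prob: "\<And>n. prob_space (\<Omega> n)"
    and Wbar_meas[measurable]: "\<And>n. (\<lambda>(\<omega>, x). Wbar n \<omega> x) \<in> borel_measurable (\<Omega> n \<Otimes>\<^sub>M Mx)"
    and Wbar_nonneg: "\<And>n \<omega> x. \<omega> \<in> space (\<Omega> n) \<Longrightarrow> x \<in> space Mx \<Longrightarrow> Wbar n \<omega> x \<ge> 0"
    and Wbar_consistent:
      "\<And>\<epsilon>. \<epsilon> > 0 \<Longrightarrow>
         (\<lambda>n. emeasure (\<Omega> n) {\<omega> \<in> space (\<Omega> n).
             (\<integral>\<^sup>+ x. ennreal ((Wbar n \<omega> x - w x)\<^sup>2) \<partial>(distr P Mx fst)) > ennreal (\<epsilon>\<^sup>2)})
         \<longlonglongrightarrow> 0"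
    and \<alpha>_range: "0 < \<alpha>" "\<alpha> < 1"
begin

lemma sets_Q[measurable_cong]: "sets Q = sets P"
  by (simp add: Q_def)

lemma space_Q: "space Q = space P"
  by (simp add: Q_def)

lemma sets_if_Q_P[simp, measurable_cong]: "sets (if b then Q else P) = sets P"
  by (simp add: sets_Q)

lemma space_if_Q_P[simp]: "space (if b then Q else P) = space P"
  by (simp add: space_Q)

lemma prob_space_if_Q_P: "prob_space (if b then Q else P)"
  by (simp add: P_prob Q_prob)

lemma space_P: "space P = space (Mx \<Otimes>\<^sub>M My)"
  using P_sets by (rule sets_eq_imp_space_eq)

lemma fst_measurable[measurable]: "fst \<in> measurable P Mx"
  by (subst measurable_cong_sets[OF P_sets refl]) simp

lemma Lf_measurable[measurable]: "Lf \<in> borel_measurable P"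
  by (subst measurable_cong_sets[OF P_sets refl]) (rule Lf_meas)

lemma Lf_unit: "z \<in> space P \<Longrightarrow> Lf z \<in> {0..1}"
  using Lf_range space_P by auto

lemma fst_in_space: "z \<in> space P \<Longrightarrow> fst z \<in> space Mx"
  using space_P by (auto simp: space_pair_measure)

lemma w_fst_pos: "z \<in> space P \<Longrightarrow> 0 < w (fst z)"
  using w_pos fst_in_space by auto

lemma Wbar_slice_measurable[measurable]: "\<omega> \<in> space (\<Omega> n) \<Longrightarrow> Wbar n \<omega> \<in> borel_measurable Mx"
  using measurable_Pair_compose_split[OF Wbar_meas measurable_const[of \<omega> "\<Omega> n" Mx] measurable_ident]
  by (simp add: id_def)

definition data :: "nat \<Rightarrow> (nat \<Rightarrow> 'x \<times> 'y) measure" where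
  "data n = (\<Pi>\<^sub>M i\<in>{..n}. if i = n then Q else P)"

definition joint :: "nat \<Rightarrow> ('o \<times> (nat \<Rightarrow> 'x \<times> 'y)) measure" where
  "joint n = \<Omega> n \<Otimes>\<^sub>M data n"

lemma component_measurable[measurable]: "i \<le> n \<Longrightarrow> (\<lambda>Z. Z i) \<in> measurable (data n) P"
  unfolding data_def
  by (subst measurable_cong_sets[OF refl sets_if_Q_P[symmetric, of "i = n"]])
     (simp add: measurable_component_singleton)

lemma prob_space_data: "prob_space (data n)"
  unfolding data_def by (intro prob_space_PiM prob_space_if_Q_P)

lemma joint_component_measurable[measurable]: "i \<le> n \<Longrightarrow> (\<lambda>x. snd x i) \<in> measurable (joint n) P"
  unfolding joint_def by measurable

lemma joint_fst_measurable[measurable]: "fst \<in> measurable (joint n) (\<Omega> n)"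
  unfolding joint_def by simp

lemma joint_component_lessThan_measurable[measurable]:
  "i \<in> {..<n} \<Longrightarrow> (\<lambda>x. snd x i) \<in> measurable (joint n) P"
  by simp

lemma Wbar_joint_measurable[measurable]:
  "i \<le> n \<Longrightarrow> (\<lambda>x. Wbar n (fst x) (fst (snd x i))) \<in> borel_measurable (joint n)"
  by (rule measurable_Pair_compose_split[OF Wbar_meas]) measurable

lemma Wbar_joint_lessThan_measurable[measurable]:
  "i \<in> {..<n} \<Longrightarrow> (\<lambda>x. Wbar n (fst x) (fst (snd x i))) \<in> borel_measurable (joint n)"
  by simp

lemma Wbar_joint_atMost_measurable[measurable]:
  "i \<in> {..n} \<Longrightarrow> (\<lambda>x. Wbar n (fst x) (fst (snd x i))) \<in> borel_measurable (joint n)"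
  by simp

lemma joint_space:
  assumes "x \<in> space (joint n)"
  shows "fst x \<in> space (\<Omega> n)" and "i \<le> n \<Longrightarrow> snd x i \<in> space P"
  using assms by (auto simp: joint_def data_def space_pair_measure space_PiM PiE_iff)

lemma nn_integral_joint_component:
  assumes i: "i \<le> n" and [measurable]: "(\<lambda>(\<omega>, z). h \<omega> z) \<in> borel_measurable (\<Omega> n \<Otimes>\<^sub>M P)"
  shows "(\<integral>\<^sup>+x. h (fst x) (snd x i) \<partial>joint n) = (\<integral>\<^sup>+\<omega>. \<integral>\<^sup>+z. h \<omega> z \<partial>(if i = n then Q else P) \<partial>\<Omega> n)"
proof -
  interpret D: prob_space "data n" by (rule prob_space_data)
  have "(\<integral>\<^sup>+x. h (fst x) (snd x i) \<partial>joint n) = (\<integral>\<^sup>+\<omega>. \<integral>\<^sup>+Z. h \<omega> (Z i) \<partial>data n \<partial>\<Omega> n)"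
    unfolding joint_def using i by (subst D.nn_integral_fst[symmetric]) (simp_all add: case_prod_beta')
  also have "\<dots> = (\<integral>\<^sup>+\<omega>. \<integral>\<^sup>+z. h \<omega> z \<partial>(if i = n then Q else P) \<partial>\<Omega> n)"
  proof (rule nn_integral_cong)
    fix \<omega> assume \<omega>: "\<omega> \<in> space (\<Omega> n)"
    let ?M = "if i = n then Q else P"
    have "h \<omega> \<in> borel_measurable ?M"
      using \<omega> by (subst measurable_cong_sets[OF sets_if_Q_P refl]) measurable
    moreover have "(\<lambda>Z. Z i) \<in> measurable (data n) ?M"
      using i by (subst measurable_cong_sets[OF refl sets_if_Q_P]) measurable
    ultimately have "(\<integral>\<^sup>+z. h \<omega> z \<partial>distr (data n) ?M (\<lambda>Z. Z i)) = (\<integral>\<^sup>+Z. h \<omega> (Z i) \<partial>data n)"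
      by (intro nn_integral_distr) simp_all
    moreover have "distr (data n) ?M (\<lambda>Z. Z i) = ?M"
      unfolding data_def using i by (intro distr_PiM_component prob_space_if_Q_P) simp
    ultimately show "(\<integral>\<^sup>+Z. h \<omega> (Z i) \<partial>data n) = (\<integral>\<^sup>+z. h \<omega> z \<partial>?M)"
      by simp
  qed
  finally show ?thesis .
qed

lemma emeasure_joint_Times_space:
  assumes "A \<in> sets (\<Omega> n)"
  shows "emeasure (joint n) (A \<times> space (data n)) = emeasure (\<Omega> n) A"
proof -
  interpret D: prob_space "data n" by (rule prob_space_data)
  interpret O: prob_space "\<Omega> n" by (rule \<Omega>_prob)
  show ?thesis
    using assms by (simp add: joint_def D.emeasure_pair_measure_Times D.emeasure_space_1)
qed

lemma emeasure_joint_space_Times: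
  assumes "B \<in> sets (data n)"
  shows "emeasure (joint n) (space (\<Omega> n) \<times> B) = emeasure (data n) B"
proof -
  interpret D: prob_space "data n" by (rule prob_space_data)
  interpret O: prob_space "\<Omega> n" by (rule \<Omega>_prob)
  show ?thesis
    using assms by (simp add: joint_def D.emeasure_pair_measure_Times O.emeasure_space_1)
qed

subsection \<open>The importance weight\<close>

lemma nn_integral_weight: "(\<integral>\<^sup>+z. ennreal (w (fst z)) \<partial>P) = 1"
proof -
  interpret Q: prob_space Q by (rule Q_prob)
  have "1 = emeasure Q (space P)"
    using Q.emeasure_space_1 space_Q by simp
  also have "\<dots> = (\<integral>\<^sup>+z. ennreal (w (fst z)) * indicator (space P) z \<partial>P)"
    unfolding Q_def by (intro emeasure_density) auto
  also have "\<dots> = (\<integral>\<^sup>+z. ennreal (w (fst z)) \<partial>P)"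
    by (intro nn_integral_cong) simp
  finally show ?thesis by simp
qed

lemma integrable_weight: "integrable P (\<lambda>z. w (fst z))"
  using nn_integral_weight w_fst_pos by (intro integrableI_nonneg) (auto intro!: AE_I2 less_imp_le)

lemma integral_weight: "(\<integral>z. w (fst z) \<partial>P) = 1"
proof -
  have "(\<integral>\<^sup>+z. ennreal (w (fst z)) \<partial>P) = ennreal (\<integral>z. w (fst z) \<partial>P)"
    using w_fst_pos by (intro nn_integral_eq_integral integrable_weight AE_I2) (auto simp: less_imp_le)
  then show ?thesis
    using nn_integral_weight by simp
qed

lemma integrable_weight_bounded:
  assumes [measurable]: "f \<in> borel_measurable P" and f: "\<And>z. z \<in> space P \<Longrightarrow> \<bar>f z\<bar> \<le> w (fst z)"
  shows "integrable P f"
proof (rule Bochner_Integration.integrable_bound[OF integrable_weight])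
  show "AE z in P. norm (f z) \<le> norm (w (fst z))"
  proof (rule AE_I2)
    fix z assume "z \<in> space P"
    with f[of z] w_fst_pos[of z] show "norm (f z) \<le> norm (w (fst z))"
      by simp
  qed
qed fact

definition tail_weight :: "real \<Rightarrow> 'x \<times> 'y \<Rightarrow> real" where
  "tail_weight K z = (if K < w (fst z) then w (fst z) else 0)"

definition tail_mass :: "real \<Rightarrow> real" where
  "tail_mass K = (\<integral>z. tail_weight K z \<partial>P)"

lemma tail_weight_measurable[measurable]: "tail_weight K \<in> borel_measurable P"
  unfolding tail_weight_def by measurable

lemma tail_weight_nonneg: "z \<in> space P \<Longrightarrow> 0 \<le> tail_weight K z"
  using w_fst_pos[of z] by (simp add: tail_weight_def less_imp_le)

lemma integrable_tail_weight: "integrable P (tail_weight K)"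
proof (rule integrable_weight_bounded)
  fix z assume "z \<in> space P"
  with w_fst_pos[of z] show "\<bar>tail_weight K z\<bar> \<le> w (fst z)"
    by (simp add: tail_weight_def)
qed measurable

lemma tail_mass_nonneg: "0 \<le> tail_mass K"
  unfolding tail_mass_def by (intro integral_nonneg_AE AE_I2 tail_weight_nonneg)

lemma nn_integral_tail_weight: "(\<integral>\<^sup>+z. ennreal (tail_weight K z) \<partial>P) = ennreal (tail_mass K)"
  unfolding tail_mass_def
  by (intro nn_integral_eq_integral integrable_tail_weight AE_I2 tail_weight_nonneg)

lemma exists_tail_mass_le:
  assumes "\<theta> > 0"
  obtains K where "K > 0" "tail_mass K \<le> \<theta>"
proof -
  have "(\<lambda>m. tail_mass (real m)) \<longlonglongrightarrow> (\<integral>z. 0 \<partial>P)"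
    unfolding tail_mass_def
  proof (rule integral_dominated_convergence[OF _ _ integrable_weight])
    show "AE z in P. (\<lambda>m. tail_weight (real m) z) \<longlonglongrightarrow> 0"
    proof (rule AE_I2)
      fix z
      have "eventually (\<lambda>m. tail_weight (real m) z = 0) sequentially"
        using eventually_ge_at_top[of "nat \<lceil>w (fst z)\<rceil>"]
        by eventually_elim (auto simp: tail_weight_def nat_le_iff ceiling_le_iff)
      then show "(\<lambda>m. tail_weight (real m) z) \<longlonglongrightarrow> 0"
        by (rule tendsto_eventually)
    qed
    show "AE z in P. norm (tail_weight (real m) z) \<le> w (fst z)" for m
      using w_fst_pos by (intro AE_I2) (auto simp: tail_weight_def less_imp_le)
  qed auto
  then have "eventually (\<lambda>m. tail_mass (real m) < \<theta>) sequentially"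
    using assms by (intro order_tendstoD) auto
  then have "eventually (\<lambda>m. 0 < m \<and> tail_mass (real m) < \<theta>) sequentially"
    by (intro eventually_conj eventually_gt_at_top)
  then obtain m where "0 < m" "tail_mass (real m) < \<theta>"
    by (auto simp: eventually_sequentially)
  with that[of "real m"] show thesis
    by simp
qed

definition shifted_risk :: "real \<Rightarrow> real" where
  "shifted_risk t = (\<integral>z. w (fst z) * Lf z * (if s (fst z) \<le> t then 1 else 0) \<partial>P)"

lemma integrable_shifted_risk: "integrable P (\<lambda>z. w (fst z) * Lf z * (if s (fst z) \<le> t then 1 else 0))"
proof (rule integrable_weight_bounded)
  fix z assume "z \<in> space P"
  with Lf_unit[of z] w_fst_pos[of z] show "\<bar>w (fst z) * Lf z * (if s (fst z) \<le> t then 1 else 0)\<bar> \<le> w (fst z)"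
    by (auto simp: abs_mult mult_left_le)
qed measurable

lemma cond_exp_risk_eq_shifted_risk:
  "(\<integral>z. w (fst z) * real_cond_exp P (vimage_algebra (space P) fst Mx) Lf z
       * (if s (fst z) \<le> t then 1 else 0) \<partial>P) / (\<integral>z. w (fst z) \<partial>P) = shifted_risk t"
proof -
  interpret P: prob_space P by (rule P_prob)
  let ?F = "vimage_algebra (space P) fst Mx"
  have fst: "fst \<in> space P \<rightarrow> space Mx"
    using fst_in_space by auto
  interpret finite_measure_subalgebra P ?F
  proof unfold_locales
    show "subalgebra P ?F"
      unfolding subalgebra_def
      using fst by (auto simp: sets_vimage_algebra2 intro!: measurable_sets[OF fst_measurable])
  qed
  have "(\<lambda>z. w (fst z) * (if s (fst z) \<le> t then 1 else 0)) \<in> borel_measurable ?F"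
    using measurable_vimage_algebra1[OF fst] by measurable
  then have "(\<integral>z. (w (fst z) * (if s (fst z) \<le> t then 1 else 0)) * real_cond_exp P ?F Lf z \<partial>P)
      = (\<integral>z. (w (fst z) * (if s (fst z) \<le> t then 1 else 0)) * Lf z \<partial>P)"
    using integrable_shifted_risk[of t] by (intro real_cond_exp_intg(2)) (simp_all add: mult_ac)
  then show ?thesis
    by (simp add: integral_weight shifted_risk_def mult_ac)
qed

lemma test_loss_below_le_shifted_risk:
  "(\<integral>\<^sup>+x. ennreal (Lf (snd x n) * (if s (fst (snd x n)) < t then 1 else 0)) \<partial>joint n)
     \<le> ennreal (shifted_risk t)"
proof -
  interpret O: prob_space "\<Omega> n" by (rule \<Omega>_prob)
  have "(\<integral>\<^sup>+x. ennreal (Lf (snd x n) * (if s (fst (snd x n)) < t then 1 else 0)) \<partial>joint n)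
      = (\<integral>\<^sup>+z. ennreal (Lf z * (if s (fst z) < t then 1 else 0)) \<partial>Q)"
    by (subst nn_integral_joint_component) (simp_all add: O.emeasure_space_1)
  also have "\<dots> = (\<integral>\<^sup>+z. ennreal (w (fst z)) * ennreal (Lf z * (if s (fst z) < t then 1 else 0)) \<partial>P)"
    unfolding Q_def by (intro nn_integral_density) auto
  also have "\<dots> \<le> (\<integral>\<^sup>+z. ennreal (w (fst z) * Lf z * (if s (fst z) \<le> t then 1 else 0)) \<partial>P)"
  proof (intro nn_integral_mono)
    fix z assume "z \<in> space P"
    with Lf_unit[of z] w_fst_pos[of z]
    show "ennreal (w (fst z)) * ennreal (Lf z * (if s (fst z) < t then 1 else 0))
        \<le> ennreal (w (fst z) * Lf z * (if s (fst z) \<le> t then 1 else 0))"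
      by (auto simp: ennreal_mult[symmetric] mult_ac)
  qed
  also have "\<dots> = ennreal (shifted_risk t)"
    unfolding shifted_risk_def using Lf_unit w_fst_pos
    by (intro nn_integral_eq_integral integrable_shifted_risk AE_I2) (auto simp: less_imp_le)
  finally show ?thesis .
qed

subsection \<open>Accuracy of the weight estimate\<close>

definition weight_close :: "nat \<Rightarrow> real \<Rightarrow> 'o set" where
  "weight_close n \<delta> = {\<omega> \<in> space (\<Omega> n).
     (\<integral>\<^sup>+z. ennreal ((Wbar n \<omega> (fst z) - w (fst z))\<^sup>2) \<partial>P) \<le> ennreal (\<delta>\<^sup>2)}"

lemma weight_close_sets[measurable]: "weight_close n \<delta> \<in> sets (\<Omega> n)"
proof -
  interpret P: prob_space P by (rule P_prob)
  have "(\<lambda>(\<omega>, z). ennreal ((Wbar n \<omega> (fst z) - w (fst z))\<^sup>2)) \<in> borel_measurable (\<Omega> n \<Otimes>\<^sub>M P)"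
    by measurable
  from P.borel_measurable_nn_integral_fst[OF this] show ?thesis
    unfolding weight_close_def by measurable
qed

lemma emeasure_not_weight_close_tendsto_0:
  assumes "\<delta> > 0"
  shows "(\<lambda>n. emeasure (\<Omega> n) (space (\<Omega> n) - weight_close n \<delta>)) \<longlonglongrightarrow> 0"
proof -
  have "space (\<Omega> n) - weight_close n \<delta> = {\<omega> \<in> space (\<Omega> n).
      (\<integral>\<^sup>+ x. ennreal ((Wbar n \<omega> x - w x)\<^sup>2) \<partial>(distr P Mx fst)) > ennreal (\<delta>\<^sup>2)}" for n
    by (auto simp: weight_close_def nn_integral_distr not_le)
  with Wbar_consistent[OF assms] show ?thesis
    by simp
qed

lemma nn_integral_abs_Wbar_diff_le:
  assumes \<omega>: "\<omega> \<in> weight_close n \<delta>" and \<delta>: "\<delta> > 0"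
  shows "(\<integral>\<^sup>+z. ennreal \<bar>Wbar n \<omega> (fst z) - w (fst z)\<bar> \<partial>P) \<le> ennreal \<delta>"
proof -
  interpret P: prob_space P by (rule P_prob)
  have [measurable]: "Wbar n \<omega> \<in> borel_measurable Mx"
    using \<omega> by (simp add: weight_close_def)
  have am_gm: "ennreal \<bar>d\<bar> \<le> ennreal (1 / (2 * \<delta>)) * ennreal (d\<^sup>2) + ennreal (\<delta> / 2)" for d :: real
  proof -
    have "0 \<le> (\<bar>d\<bar> - \<delta>)\<^sup>2"
      by simp
    then have "\<bar>d\<bar> \<le> 1 / (2 * \<delta>) * d\<^sup>2 + \<delta> / 2"
      using \<delta> by (simp add: field_simps power2_eq_square)
    then show ?thesis
      using \<delta> by (simp add: ennreal_mult[symmetric] ennreal_plus[symmetric] del: ennreal_plus)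
  qed
  have "(\<integral>\<^sup>+z. ennreal \<bar>Wbar n \<omega> (fst z) - w (fst z)\<bar> \<partial>P)
      \<le> (\<integral>\<^sup>+z. ennreal (1 / (2 * \<delta>)) * ennreal ((Wbar n \<omega> (fst z) - w (fst z))\<^sup>2) + ennreal (\<delta> / 2) \<partial>P)"
    by (intro nn_integral_mono am_gm)
  also have "\<dots> = ennreal (1 / (2 * \<delta>)) * (\<integral>\<^sup>+z. ennreal ((Wbar n \<omega> (fst z) - w (fst z))\<^sup>2) \<partial>P) + ennreal (\<delta> / 2)"
    by (subst nn_integral_add) (auto simp: nn_integral_cmult P.emeasure_space_1)
  also have "\<dots> \<le> ennreal (1 / (2 * \<delta>)) * ennreal (\<delta>\<^sup>2) + ennreal (\<delta> / 2)"
    using \<omega> by (intro add_mono mult_left_mono) (auto simp: weight_close_def)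
  also have "\<dots> = ennreal \<delta>"
    using \<delta> by (simp add: ennreal_mult[symmetric] ennreal_plus[symmetric] power2_eq_square del: ennreal_plus)
  finally show ?thesis .
qed

lemma nn_integral_weight_error_le:
  assumes \<omega>: "\<omega> \<in> weight_close n \<delta>" and \<delta>: "\<delta> > 0"
  shows "(\<integral>\<^sup>+z. ennreal (tail_weight K z + \<bar>Wbar n \<omega> (fst z) - w (fst z)\<bar>) \<partial>P) \<le> ennreal (tail_mass K + \<delta>)"
proof -
  have [measurable]: "Wbar n \<omega> \<in> borel_measurable Mx"
    using \<omega> by (simp add: weight_close_def)
  have "(\<integral>\<^sup>+z. ennreal (tail_weight K z + \<bar>Wbar n \<omega> (fst z) - w (fst z)\<bar>) \<partial>P)
      = (\<integral>\<^sup>+z. ennreal (tail_weight K z) \<partial>P) + (\<integral>\<^sup>+z. ennreal \<bar>Wbar n \<omega> (fst z) - w (fst z)\<bar> \<partial>P)"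
    using tail_weight_nonneg by (subst nn_integral_add[symmetric]) (auto intro!: nn_integral_cong simp: ennreal_plus)
  also have "\<dots> \<le> ennreal (tail_mass K) + ennreal \<delta>"
    using nn_integral_abs_Wbar_diff_le[OF \<omega> \<delta>] by (simp add: nn_integral_tail_weight add_left_mono)
  also have "\<dots> = ennreal (tail_mass K + \<delta>)"
    using \<delta> tail_mass_nonneg by (simp add: ennreal_plus)
  finally show ?thesis .
qed

lemma nn_integral_large_Wbar_le:
  assumes \<omega>: "\<omega> \<in> weight_close n \<delta>" and K: "K > 0" and c: "K + 1 \<le> c"
  shows "(\<integral>\<^sup>+z. ennreal (if c \<le> Wbar n \<omega> (fst z) then 1 else 0) \<partial>Q) \<le> ennreal (tail_mass K + K * \<delta>\<^sup>2)"
proof -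
  have [measurable]: "Wbar n \<omega> \<in> borel_measurable Mx"
    using \<omega> by (simp add: weight_close_def)
  have "(\<integral>\<^sup>+z. ennreal (if c \<le> Wbar n \<omega> (fst z) then 1 else 0) \<partial>Q)
      = (\<integral>\<^sup>+z. ennreal (w (fst z)) * ennreal (if c \<le> Wbar n \<omega> (fst z) then 1 else 0) \<partial>P)"
    unfolding Q_def by (rule nn_integral_density) measurable
  \<comment> \<open>a large estimate at a point of small weight is an estimation error of size at least one\<close>
  also have "\<dots> \<le> (\<integral>\<^sup>+z. ennreal (tail_weight K z) + ennreal K * ennreal ((Wbar n \<omega> (fst z) - w (fst z))\<^sup>2) \<partial>P)"
  proof (rule nn_integral_mono)
    fix z assume z: "z \<in> space P"
    have "w (fst z) * (if c \<le> Wbar n \<omega> (fst z) then 1 else 0) \<le> tail_weight K z + K * (Wbar n \<omega> (fst z) - w (fst z))\<^sup>2"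
    proof (cases "c \<le> Wbar n \<omega> (fst z) \<and> w (fst z) \<le> K")
      case True
      then have "1 \<le> (Wbar n \<omega> (fst z) - w (fst z))\<^sup>2"
        using c by (intro one_le_power) linarith
      then have "K \<le> K * (Wbar n \<omega> (fst z) - w (fst z))\<^sup>2"
        using K by (simp add: mult_le_cancel_left1)
      with True show ?thesis
        by (simp add: tail_weight_def)
    qed (use K w_fst_pos[OF z] in \<open>auto simp: tail_weight_def\<close>)
    then show "ennreal (w (fst z)) * ennreal (if c \<le> Wbar n \<omega> (fst z) then 1 else 0)
        \<le> ennreal (tail_weight K z) + ennreal K * ennreal ((Wbar n \<omega> (fst z) - w (fst z))\<^sup>2)"
      using K w_fst_pos[OF z] tail_weight_nonneg[OF z]
      by (simp add: ennreal_mult[symmetric] ennreal_plus[symmetric] del: ennreal_plus)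
  qed
  also have "\<dots> = ennreal (tail_mass K) + ennreal K * (\<integral>\<^sup>+z. ennreal ((Wbar n \<omega> (fst z) - w (fst z))\<^sup>2) \<partial>P)"
    by (subst nn_integral_add) (auto simp: nn_integral_cmult nn_integral_tail_weight)
  also have "\<dots> \<le> ennreal (tail_mass K) + ennreal K * ennreal (\<delta>\<^sup>2)"
    using \<omega> by (intro add_mono mult_left_mono) (auto simp: weight_close_def)
  also have "\<dots> = ennreal (tail_mass K + K * \<delta>\<^sup>2)"
    using K tail_mass_nonneg by (simp add: ennreal_mult ennreal_plus)
  finally show ?thesis .
qed

lemma nn_integral_joint_component_weight_close_le:
  assumes i: "i \<le> n" and [measurable]: "(\<lambda>(\<omega>, z). h \<omega> z) \<in> borel_measurable (\<Omega> n \<Otimes>\<^sub>M P)"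
    and C: "\<And>\<omega>. \<omega> \<in> weight_close n \<delta> \<Longrightarrow> (\<integral>\<^sup>+z. h \<omega> z \<partial>(if i = n then Q else P)) \<le> C"
  shows "(\<integral>\<^sup>+x. h (fst x) (snd x i) * indicator (weight_close n \<delta> \<times> space (data n)) x \<partial>joint n) \<le> C"
proof -
  interpret O: prob_space "\<Omega> n" by (rule \<Omega>_prob)
  have "(\<integral>\<^sup>+x. h (fst x) (snd x i) * indicator (weight_close n \<delta> \<times> space (data n)) x \<partial>joint n)
      = (\<integral>\<^sup>+x. h (fst x) (snd x i) * indicator (weight_close n \<delta>) (fst x) \<partial>joint n)"
    by (intro nn_integral_cong) (auto simp: joint_def space_pair_measure indicator_def)
  also have "\<dots> = (\<integral>\<^sup>+\<omega>. \<integral>\<^sup>+z. h \<omega> z * indicator (weight_close n \<delta>) \<omega> \<partial>(if i = n then Q else P) \<partial>\<Omega> n)"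
    using i by (intro nn_integral_joint_component) measurable
  also have "\<dots> \<le> (\<integral>\<^sup>+\<omega>. C \<partial>\<Omega> n)"
    using C by (intro nn_integral_mono) (auto simp: indicator_def)
  also have "\<dots> = C"
    by (simp add: O.emeasure_space_1)
  finally show ?thesis .
qed

lemma emeasure_joint_not_weight_close:
  "emeasure (joint n) (space (joint n) - weight_close n \<delta> \<times> space (data n))
     = emeasure (\<Omega> n) (space (\<Omega> n) - weight_close n \<delta>)"
proof -
  have "space (joint n) - weight_close n \<delta> \<times> space (data n) = (space (\<Omega> n) - weight_close n \<delta>) \<times> space (data n)"
    by (auto simp: joint_def space_pair_measure)
  then show ?thesis
    by (simp add: emeasure_joint_Times_space)
qed

lemma weight_close_Times_sets[measurable]: "weight_close n \<delta> \<times> space (data n) \<in> sets (joint n)"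
  unfolding joint_def by (intro pair_measureI weight_close_sets sets.top)

definition clipped_margin :: "real \<Rightarrow> real \<Rightarrow> 'x \<times> 'y \<Rightarrow> real" where
  "clipped_margin K t z = min (w (fst z)) K * (Lf z * (if s (fst z) \<le> t then 1 else 0) - \<alpha>)"

lemma clipped_margin_measurable[measurable]: "clipped_margin K t \<in> borel_measurable P"
  unfolding clipped_margin_def by measurable

lemma abs_excess_loss_le: "z \<in> space P \<Longrightarrow> \<bar>Lf z * (if s (fst z) \<le> t then 1 else 0) - \<alpha>\<bar> \<le> 1"
  using Lf_unit[of z] \<alpha>_range by auto

lemma clipped_margin_bounds:
  assumes "K > 0" "z \<in> space P"
  shows "clipped_margin K t z \<in> {-K..K}"
proof -
  have "\<bar>clipped_margin K t z\<bar> \<le> min (w (fst z)) K * 1"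
    unfolding clipped_margin_def abs_mult using assms w_fst_pos[of z] abs_excess_loss_le[of z t]
    by (intro mult_mono) auto
  then show ?thesis
    by auto
qed

lemma clipped_margin_approx:
  assumes "K > 0" "z \<in> space P"
  shows "\<bar>w (fst z) * (Lf z * (if s (fst z) \<le> t then 1 else 0) - \<alpha>) - clipped_margin K t z\<bar> \<le> tail_weight K z"
  unfolding clipped_margin_def tail_weight_def
  using assms w_fst_pos[of z] abs_excess_loss_le[of z t] by (intro abs_mult_sub_min_mult_le) auto

lemma integral_clipped_margin_ge:
  assumes K: "K > 0"
  shows "shifted_risk t - \<alpha> - tail_mass K \<le> (\<integral>z. clipped_margin K t z \<partial>P)"
proof -
  have int_margin: "integrable P (clipped_margin K t)"
  proof (rule integrable_weight_bounded)
    fix z assume z: "z \<in> space P"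
    have "\<bar>clipped_margin K t z\<bar> \<le> min (w (fst z)) K * 1"
      unfolding clipped_margin_def abs_mult using K z w_fst_pos[of z] abs_excess_loss_le[of z t]
      by (intro mult_mono) auto
    then show "\<bar>clipped_margin K t z\<bar> \<le> w (fst z)"
      by simp
  qed measurable
  have "shifted_risk t - \<alpha> - tail_mass K
      = (\<integral>z. w (fst z) * Lf z * (if s (fst z) \<le> t then 1 else 0) - \<alpha> * w (fst z) - tail_weight K z \<partial>P)"
    using integrable_shifted_risk integrable_weight integrable_tail_weight
    by (simp add: shifted_risk_def tail_mass_def integral_weight)
  also have "\<dots> \<le> (\<integral>z. clipped_margin K t z \<partial>P)"
  proof (rule integral_mono)
    show "integrable P (\<lambda>z. w (fst z) * Lf z * (if s (fst z) \<le> t then 1 else 0) - \<alpha> * w (fst z) - tail_weight K z)"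
      using integrable_shifted_risk integrable_weight integrable_tail_weight by simp
    fix z assume "z \<in> space P"
    from clipped_margin_approx[OF K this, of t]
    show "w (fst z) * Lf z * (if s (fst z) \<le> t then 1 else 0) - \<alpha> * w (fst z) - tail_weight K z \<le> clipped_margin K t z"
      by (simp add: algebra_simps abs_le_iff)
  qed fact
  finally show ?thesis .
qed

subsection \<open>Three unlikely events\<close>

lemma emeasure_clipped_margin_sum_low:
  assumes K: "K > 0" and n: "n > 0" and \<eta>: "\<eta> \<ge> 0"
  shows "emeasure (joint n) {x \<in> space (joint n).
           (\<Sum>i<n. clipped_margin K t (snd x i)) \<le> real n * (\<integral>z. clipped_margin K t z \<partial>P) - real n * \<eta>}
         \<le> ennreal (exp (- real n * \<eta>\<^sup>2 / (2 * K\<^sup>2)))"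
proof -
  let ?B = "{Z \<in> space (data n). (\<Sum>i<n. clipped_margin K t (Z i)) \<le> real n * (\<integral>z. clipped_margin K t z \<partial>P) - real n * \<eta>}"
  have "{x \<in> space (joint n). (\<Sum>i<n. clipped_margin K t (snd x i)) \<le> real n * (\<integral>z. clipped_margin K t z \<partial>P) - real n * \<eta>}
      = space (\<Omega> n) \<times> ?B"
    by (auto simp: joint_def space_pair_measure)
  moreover have "?B \<in> sets (data n)"
    by measurable
  moreover have "emeasure (data n) {Z \<in> space (data n). (\<Sum>i\<in>{..<n}. clipped_margin K t (Z i))
        \<le> real (card {..<n}) * (\<integral>z. clipped_margin K t z \<partial>P) - real n * \<eta>}
      \<le> ennreal (exp (-2 * (real n * \<eta>)\<^sup>2 / (real (card {..<n}) * (K - - K)\<^sup>2)))"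
    unfolding data_def
    by (rule Hoeffding_PiM_sum_le) (use K n \<eta> clipped_margin_bounds[OF K] in \<open>auto simp: prob_space_if_Q_P\<close>)
  moreover have "-2 * (real n * \<eta>)\<^sup>2 / (real n * (K - - K)\<^sup>2) = - real n * \<eta>\<^sup>2 / (2 * K\<^sup>2)"
    using n K by (simp add: power2_eq_square field_simps)
  ultimately show ?thesis
    by (simp add: emeasure_joint_space_Times del: minus_minus)
qed

lemma emeasure_weight_error_sum_large:
  assumes n: "n > 0" and \<eta>: "\<eta> > 0" and \<delta>: "\<delta> > 0"
  shows "emeasure (joint n) {x \<in> space (joint n). real n * \<eta> \<le>
           (\<Sum>i<n. tail_weight K (snd x i) + \<bar>Wbar n (fst x) (fst (snd x i)) - w (fst (snd x i))\<bar>)}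
         \<le> emeasure (\<Omega> n) (space (\<Omega> n) - weight_close n \<delta>) + ennreal ((tail_mass K + \<delta>) / \<eta>)"
proof -
  let ?G = "weight_close n \<delta> \<times> space (data n)"
  let ?e = "\<lambda>\<omega> z. tail_weight K z + \<bar>Wbar n \<omega> (fst z) - w (fst z)\<bar>"
  have "emeasure (joint n) {x \<in> space (joint n). real n * \<eta> \<le> (\<Sum>i<n. ?e (fst x) (snd x i))}
      \<le> emeasure (joint n) (space (joint n) - ?G)
        + ennreal (1 / (real n * \<eta>)) * (\<Sum>i<n. \<integral>\<^sup>+x. ennreal (?e (fst x) (snd x i)) * indicator ?G x \<partial>joint n)"
  proof (rule emeasure_sum_ge_le_compl_plus_nn_integral)
    show "(\<lambda>x. ?e (fst x) (snd x i)) \<in> borel_measurable (joint n)" if "i \<in> {..<n}" for i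
      using that by measurable
    show "0 \<le> ?e (fst x) (snd x i)" if "i \<in> {..<n}" "x \<in> space (joint n)" for i x
      using that tail_weight_nonneg joint_space(2) by simp
  qed (use n \<eta> in simp_all)
  also have "\<dots> \<le> emeasure (joint n) (space (joint n) - ?G)
      + ennreal (1 / (real n * \<eta>)) * (\<Sum>i<n. ennreal (tail_mass K + \<delta>))"
  proof (intro add_left_mono mult_left_mono sum_mono)
    fix i assume "i \<in> {..<n}"
    then show "(\<integral>\<^sup>+x. ennreal (?e (fst x) (snd x i)) * indicator ?G x \<partial>joint n) \<le> ennreal (tail_mass K + \<delta>)"
      using nn_integral_weight_error_le[OF _ \<delta>]
      by (intro nn_integral_joint_component_weight_close_le[where h = "\<lambda>\<omega> z. ennreal (?e \<omega> z)"]) auto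
  qed simp
  also have "ennreal (1 / (real n * \<eta>)) * (\<Sum>i<n. ennreal (tail_mass K + \<delta>)) = ennreal ((tail_mass K + \<delta>) / \<eta>)"
    using n \<eta> \<delta> tail_mass_nonneg[of K]
    by (simp add: ennreal_of_nat_eq_real_of_nat ennreal_mult'[symmetric] del: ennreal_plus)
  finally show ?thesis
    by (simp add: emeasure_joint_not_weight_close)
qed

lemma emeasure_test_weight_large:
  assumes K: "K > 0" and c: "K + 1 \<le> c"
  shows "emeasure (joint n) {x \<in> space (joint n). c \<le> Wbar n (fst x) (fst (snd x n))}
         \<le> emeasure (\<Omega> n) (space (\<Omega> n) - weight_close n \<delta>) + ennreal (tail_mass K + K * \<delta>\<^sup>2)"
proof -
  define G where "G = weight_close n \<delta> \<times> space (data n)"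
  have "emeasure (joint n) {x \<in> space (joint n). c \<le> Wbar n (fst x) (fst (snd x n))}
      \<le> emeasure (joint n) (space (joint n) - G)
        + (\<integral>\<^sup>+x. ennreal (if c \<le> Wbar n (fst x) (fst (snd x n)) then 1 else 0) * indicator G x \<partial>joint n)"
    unfolding G_def by (rule emeasure_le_emeasure_compl_plus_nn_integral) simp_all
  also have "(\<integral>\<^sup>+x. ennreal (if c \<le> Wbar n (fst x) (fst (snd x n)) then 1 else 0) * indicator G x \<partial>joint n)
      \<le> ennreal (tail_mass K + K * \<delta>\<^sup>2)"
    unfolding G_def
    using nn_integral_large_Wbar_le[OF _ K c]
    by (intro nn_integral_joint_component_weight_close_le[where h = "\<lambda>\<omega> z. ennreal (if c \<le> Wbar n \<omega> (fst z) then 1 else 0)"]) auto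
  finally show ?thesis
    by (simp add: G_def emeasure_joint_not_weight_close add_left_mono)
qed

subsection \<open>Asymptotic control of the MDR\<close>

definition risk_below_level :: "nat \<Rightarrow> real \<Rightarrow> ('o \<times> (nat \<Rightarrow> 'x \<times> 'y)) set" where
  "risk_below_level n t = {x \<in> space (joint n).
     (\<Sum>i<n. Wbar n (fst x) (fst (snd x i)) * Lf (snd x i) * (if s (fst (snd x i)) \<le> t then 1 else 0))
       \<le> \<alpha> * (\<Sum>i\<le>n. Wbar n (fst x) (fst (snd x i)))}"

lemma risk_below_level_sets[measurable]: "risk_below_level n t \<in> sets (joint n)"
  unfolding risk_below_level_def by measurable

definition mdr :: "nat \<Rightarrow> ennreal" where
  "mdr n = (\<integral>\<^sup>+ (\<omega>, Z). ennreal (Lf (Z n)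
     * (if evalue n (\<lambda>i. Wbar n \<omega> (fst (Z i))) (\<lambda>i. Lf (Z i)) (\<lambda>i. s (fst (Z i))) \<alpha> \<ge> ereal (1 / \<alpha>)
        then 1 else 0)) \<partial>joint n)"

lemma mdr_le: "mdr n \<le> ennreal (shifted_risk t) + emeasure (joint n) (risk_below_level n t)"
proof -
  define E where "E x = evalue n (\<lambda>i. Wbar n (fst x) (fst (snd x i))) (\<lambda>i. Lf (snd x i)) (\<lambda>i. s (fst (snd x i))) \<alpha>"
    for x :: "'o \<times> (nat \<Rightarrow> 'x \<times> 'y)"
  have "mdr n = (\<integral>\<^sup>+x. ennreal (Lf (snd x n) * (if E x \<ge> ereal (1 / \<alpha>) then 1 else 0)) \<partial>joint n)"
    by (simp add: mdr_def E_def case_prod_beta')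
  also have "\<dots> \<le> (\<integral>\<^sup>+x. ennreal (Lf (snd x n) * (if s (fst (snd x n)) < t then 1 else 0))
                      + indicator (risk_below_level n t) x \<partial>joint n)"
  proof (rule nn_integral_mono)
    fix x assume x: "x \<in> space (joint n)"
    have Z: "snd x i \<in> space P" if "i \<le> n" for i
      using joint_space(2)[OF x that] .
    have "x \<in> risk_below_level n t" if E: "E x \<ge> ereal (1 / \<alpha>)" and t: "t \<le> s (fst (snd x n))"
    proof -
      have pos: "0 < E x"
        using E \<alpha>_range by (auto intro: less_le_trans[of 0 "ereal (1 / \<alpha>)"])
      have W: "0 \<le> Wbar n (fst x) (fst (snd x i))" if "i \<le> n" for i
        using Wbar_nonneg[OF joint_space(1)[OF x] fst_in_space[OF Z[OF that]]] .
      have L: "0 \<le> Lf (snd x i)" if "i < n" for i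
        using Lf_unit[OF Z, of i] that by simp
      have "(\<Sum>i<n. Wbar n (fst x) (fst (snd x i)) * Lf (snd x i) * (if s (fst (snd x i)) \<le> t then 1 else 0))
          \<le> \<alpha> * (\<Sum>i\<le>n. Wbar n (fst x) (fst (snd x i)))"
        by (rule evalue_pos_imp_weighted_risk_le[of n "\<lambda>i. Wbar n (fst x) (fst (snd x i))" "\<lambda>i. Lf (snd x i)"])
          (use W L pos t in \<open>auto simp: E_def\<close>)
      then show ?thesis
        using x by (simp add: risk_below_level_def)
    qed
    then show "ennreal (Lf (snd x n) * (if E x \<ge> ereal (1 / \<alpha>) then 1 else 0))
        \<le> ennreal (Lf (snd x n) * (if s (fst (snd x n)) < t then 1 else 0)) + indicator (risk_below_level n t) x"
      using Lf_unit[OF Z[of n]] by (auto simp: not_less)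
  qed
  also have "\<dots> = (\<integral>\<^sup>+x. ennreal (Lf (snd x n) * (if s (fst (snd x n)) < t then 1 else 0)) \<partial>joint n)
      + emeasure (joint n) (risk_below_level n t)"
    by (subst nn_integral_add) auto
  also have "\<dots> \<le> ennreal (shifted_risk t) + emeasure (joint n) (risk_below_level n t)"
    by (intro add_right_mono test_loss_below_le_shifted_risk)
  finally show ?thesis .
qed

lemma risk_below_level_subset:
  assumes n: "n > 0" and K: "K > 0" and gap: "3 * \<eta> \<le> (\<integral>z. clipped_margin K t z \<partial>P)"
  shows "risk_below_level n t \<subseteq>
      {x \<in> space (joint n). (\<Sum>i<n. clipped_margin K t (snd x i)) \<le> real n * (\<integral>z. clipped_margin K t z \<partial>P) - real n * \<eta>}
    \<union> {x \<in> space (joint n). real n * \<eta> \<le>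
        (\<Sum>i<n. tail_weight K (snd x i) + \<bar>Wbar n (fst x) (fst (snd x i)) - w (fst (snd x i))\<bar>)}
    \<union> {x \<in> space (joint n). real n * \<eta> \<le> Wbar n (fst x) (fst (snd x n))}"
    (is "_ \<subseteq> ?E")
proof
  fix x assume x: "x \<in> risk_below_level n t"
  then have x_space: "x \<in> space (joint n)"
    by (simp add: risk_below_level_def)
  define W where "W i = Wbar n (fst x) (fst (snd x i))" for i
  define c where "c i = Lf (snd x i) * (if s (fst (snd x i)) \<le> t then 1 else 0) - \<alpha>" for i
  define err where "err i = tail_weight K (snd x i) + \<bar>W i - w (fst (snd x i))\<bar>" for i
  have pointwise: "clipped_margin K t (snd x i) - err i \<le> W i * c i" if "i < n" for i
  proof -
    have z: "snd x i \<in> space P"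
      using joint_space(2)[OF x_space] that by simp
    have "\<bar>W i * c i - w (fst (snd x i)) * c i\<bar> \<le> \<bar>W i - w (fst (snd x i))\<bar>"
      using abs_excess_loss_le[OF z, of t]
      by (simp add: c_def abs_mult mult_left_le flip: left_diff_distrib)
    moreover have "\<bar>w (fst (snd x i)) * c i - clipped_margin K t (snd x i)\<bar> \<le> tail_weight K (snd x i)"
      using clipped_margin_approx[OF K z] by (simp add: c_def)
    ultimately show ?thesis
      unfolding err_def abs_le_iff by linarith
  qed
  \<comment> \<open>below the level, the weighted excess losses of the calibration points are paid for by the test weight\<close>
  have "(\<Sum>i<n. W i * c i) \<le> \<alpha> * W n"
    using x by (simp add: risk_below_level_def W_def c_def algebra_simps sum_subtractf sum_distrib_left
        lessThan_Suc_atMost[symmetric])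
  also have "\<dots> \<le> W n"
    using Wbar_nonneg joint_space[OF x_space] fst_in_space \<alpha>_range by (simp add: W_def mult_left_le_one_le)
  finally have "(\<Sum>i<n. clipped_margin K t (snd x i)) - (\<Sum>i<n. err i) \<le> W n"
    using pointwise sum_mono[of "{..<n}" "\<lambda>i. clipped_margin K t (snd x i) - err i" "\<lambda>i. W i * c i"]
    by (simp add: sum_subtractf)
  moreover have "real n * (3 * \<eta>) \<le> real n * (\<integral>z. clipped_margin K t z \<partial>P)"
    using gap by (intro mult_left_mono) auto
  ultimately show "x \<in> ?E"
    using x_space by (auto simp: W_def err_def not_le)
qed

lemma emeasure_risk_below_level_le:
  assumes n: "n > 0" and K: "K > 0" and \<delta>: "\<delta> > 0" and \<eta>: "\<eta> > 0"
    and gap: "3 * \<eta> \<le> (\<integral>z. clipped_margin K t z \<partial>P)" and nK: "K + 1 \<le> real n * \<eta>"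
  shows "emeasure (joint n) (risk_below_level n t)
    \<le> ennreal (exp (- real n * \<eta>\<^sup>2 / (2 * K\<^sup>2))) + 2 * emeasure (\<Omega> n) (space (\<Omega> n) - weight_close n \<delta>)
      + ennreal ((tail_mass K + \<delta>) / \<eta> + tail_mass K + K * \<delta>\<^sup>2)"
proof -
  let ?g = "emeasure (\<Omega> n) (space (\<Omega> n) - weight_close n \<delta>)"
  let ?E1 = "{x \<in> space (joint n). (\<Sum>i<n. clipped_margin K t (snd x i)) \<le> real n * (\<integral>z. clipped_margin K t z \<partial>P) - real n * \<eta>}"
  let ?E2 = "{x \<in> space (joint n). real n * \<eta> \<le>
        (\<Sum>i<n. tail_weight K (snd x i) + \<bar>Wbar n (fst x) (fst (snd x i)) - w (fst (snd x i))\<bar>)}"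
  let ?E3 = "{x \<in> space (joint n). real n * \<eta> \<le> Wbar n (fst x) (fst (snd x n))}"
  have "emeasure (joint n) (risk_below_level n t) \<le> emeasure (joint n) (?E1 \<union> ?E2 \<union> ?E3)"
    using risk_below_level_subset[OF n K gap] by (intro emeasure_mono) measurable
  also have "\<dots> \<le> emeasure (joint n) ?E1 + emeasure (joint n) ?E2 + emeasure (joint n) ?E3"
    by (intro order_trans[OF emeasure_subadditive] add_mono order_refl emeasure_subadditive) measurable
  also have "\<dots> \<le> ennreal (exp (- real n * \<eta>\<^sup>2 / (2 * K\<^sup>2)))
      + (?g + ennreal ((tail_mass K + \<delta>) / \<eta>)) + (?g + ennreal (tail_mass K + K * \<delta>\<^sup>2))"
    using \<eta> by (intro add_mono emeasure_clipped_margin_sum_low emeasure_weight_error_sum_large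
        emeasure_test_weight_large n K \<delta> nK) auto
  also have "\<dots> = ennreal (exp (- real n * \<eta>\<^sup>2 / (2 * K\<^sup>2))) + 2 * ?g
      + (ennreal ((tail_mass K + \<delta>) / \<eta>) + ennreal (tail_mass K + K * \<delta>\<^sup>2))"
    by (simp only: mult_2 ac_simps)
  also have "ennreal ((tail_mass K + \<delta>) / \<eta>) + ennreal (tail_mass K + K * \<delta>\<^sup>2)
      = ennreal ((tail_mass K + \<delta>) / \<eta> + tail_mass K + K * \<delta>\<^sup>2)"
    using \<eta> \<delta> K tail_mass_nonneg[of K] by (simp add: ennreal_plus[symmetric] add.assoc del: ennreal_plus)
  finally show ?thesis .
qed

lemma limsup_risk_below_level_le:
  assumes K: "K > 0" and \<delta>: "\<delta> > 0" and \<eta>: "\<eta> > 0" and gap: "3 * \<eta> \<le> (\<integral>z. clipped_margin K t z \<partial>P)"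
  shows "limsup (\<lambda>n. emeasure (joint n) (risk_below_level n t))
    \<le> ennreal ((tail_mass K + \<delta>) / \<eta> + tail_mass K + K * \<delta>\<^sup>2)"
proof -
  define c where "c = ennreal ((tail_mass K + \<delta>) / \<eta> + tail_mass K + K * \<delta>\<^sup>2)"
  define b where "b n = ennreal (exp (- real n * \<eta>\<^sup>2 / (2 * K\<^sup>2)))
      + 2 * emeasure (\<Omega> n) (space (\<Omega> n) - weight_close n \<delta>) + c" for n
  have "eventually (\<lambda>n. emeasure (joint n) (risk_below_level n t) \<le> b n) sequentially"
    using eventually_ge_at_top[of "nat \<lceil>(K + 1) / \<eta>\<rceil> + 1"]
  proof eventually_elim
    case (elim n)
    then have "(K + 1) / \<eta> \<le> real n"
      by linarith
    then have "K + 1 \<le> real n * \<eta>"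
      using \<eta> by (simp add: divide_le_eq)
    moreover have "n > 0"
      using elim by simp
    ultimately show ?case
      unfolding b_def c_def using K \<delta> \<eta> gap by (intro emeasure_risk_below_level_le)
  qed
  then have "limsup (\<lambda>n. emeasure (joint n) (risk_below_level n t)) \<le> limsup b"
    by (rule Limsup_mono)
  also have "limsup b = c"
  proof (intro lim_imp_Limsup trivial_limit_sequentially)
    have "(\<lambda>n. exp (- real n * \<eta>\<^sup>2 / (2 * K\<^sup>2))) \<longlonglongrightarrow> 0"
      using \<eta> K by real_asymp
    then have "b \<longlonglongrightarrow> ennreal 0 + 2 * 0 + c"
      unfolding b_def
      by (intro tendsto_add tendsto_ennrealI ennreal_tendsto_cmult emeasure_not_weight_close_tendsto_0 \<delta>
          tendsto_const) auto
    then show "b \<longlonglongrightarrow> c"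
      by simp
  qed
  finally show ?thesis
    by (simp add: c_def)
qed

lemma risk_below_level_tendsto_0:
  assumes gap: "\<alpha> < shifted_risk t"
  shows "(\<lambda>n. emeasure (joint n) (risk_below_level n t)) \<longlonglongrightarrow> 0"
proof (rule tendsto_0_if_Limsup_eq_0_ennreal)
  show "limsup (\<lambda>n. emeasure (joint n) (risk_below_level n t)) = 0"
  proof (rule antisym[OF ennreal_le_epsilon zero_le])
    fix e :: real assume e: "0 < e"
    define \<eta> where "\<eta> = (shifted_risk t - \<alpha>) / 4"
    have \<eta>: "\<eta> > 0"
      using gap by (simp add: \<eta>_def)
    obtain K where K: "K > 0" and tail: "tail_mass K \<le> min \<eta> (min (e * \<eta> / 4) (e / 4))"
      using exists_tail_mass_le[of "min \<eta> (min (e * \<eta> / 4) (e / 4))"] \<eta> e by auto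
    define \<delta> where "\<delta> = min 1 (min (e * \<eta> / 4) (e / (4 * K)))"
    have \<delta>: "\<delta> > 0" "\<delta> \<le> 1" "\<delta> \<le> e * \<eta> / 4" "\<delta> \<le> e / (4 * K)"
      using e \<eta> K by (auto simp: \<delta>_def)
    have "3 * \<eta> \<le> (\<integral>z. clipped_margin K t z \<partial>P)"
      using integral_clipped_margin_ge[OF K, of t] tail by (simp add: \<eta>_def)
    note limsup = limsup_risk_below_level_le[OF K \<delta>(1) \<eta> this]
    have "tail_mass K / \<eta> \<le> e / 4" "\<delta> / \<eta> \<le> e / 4"
      using tail \<delta>(3) \<eta> by (simp_all add: divide_le_eq mult.commute)
    moreover have "K * \<delta>\<^sup>2 \<le> e / 4"
    proof -
      have "K * \<delta>\<^sup>2 \<le> K * \<delta>"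
        using K \<delta>(1,2) by (simp add: power2_eq_square mult_left_le)
      also have "\<dots> \<le> e / 4"
        using K \<delta>(4) by (auto simp: le_divide_eq mult_ac)
      finally show ?thesis .
    qed
    moreover have "tail_mass K \<le> e / 4"
      using tail by simp
    ultimately have "(tail_mass K + \<delta>) / \<eta> + tail_mass K + K * \<delta>\<^sup>2 \<le> e"
      unfolding add_divide_distrib by linarith
    with limsup show "limsup (\<lambda>n. emeasure (joint n) (risk_below_level n t)) \<le> 0 + ennreal e"
      by (simp add: order_trans ennreal_leI)
  qed
qed

lemma limsup_mdr_le:
  assumes "\<alpha> < shifted_risk t"
  shows "limsup mdr \<le> ennreal (shifted_risk t)"
proof -
  have "limsup mdr \<le> limsup (\<lambda>n. ennreal (shifted_risk t) + emeasure (joint n) (risk_below_level n t))"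
    by (intro Limsup_mono always_eventually allI mdr_le)
  also have "\<dots> = ennreal (shifted_risk t)"
    using tendsto_add[OF tendsto_const risk_below_level_tendsto_0[OF assms]]
    by (intro lim_imp_Limsup) simp_all
  finally show ?thesis .
qed

end

theorem theorem6p3:
  fixes Mx :: "'x measure" and My :: "'y measure"
    and P Q :: "('x \<times> 'y) measure"
    and w :: "'x \<Rightarrow> real" and s :: "'x \<Rightarrow> real" and Lf :: "'x \<times> 'y \<Rightarrow> real"
    and \<Omega> :: "nat \<Rightarrow> 'o measure" and Wbar :: "nat \<Rightarrow> 'o \<Rightarrow> 'x \<Rightarrow> real"
    and \<alpha> :: real
  assumes P_prob: "prob_space P"
    and P_sets: "sets P = sets (Mx \<Otimes>\<^sub>M My)"
    and w_meas: "w \<in> borel_measurable Mx"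
    and w_pos: "\<And>x. x \<in> space Mx \<Longrightarrow> w x > 0"
    and Q_def: "Q = density P (\<lambda>z. ennreal (w (fst z)))"
    and Q_prob: "prob_space Q"
    and Lf_meas: "Lf \<in> borel_measurable (Mx \<Otimes>\<^sub>M My)"
    and Lf_range: "\<And>z. z \<in> space (Mx \<Otimes>\<^sub>M My) \<Longrightarrow> Lf z \<in> {0..1}"
    and s_meas: "s \<in> borel_measurable Mx"
    and s_range: "\<And>x. x \<in> space Mx \<Longrightarrow> s x \<in> {0..1}"
    and \<Omega>_prob: "\<And>n. prob_space (\<Omega> n)"
    and Wbar_meas: "\<And>n. (\<lambda>(\<omega>, x). Wbar n \<omega> x) \<in> borel_measurable (\<Omega> n \<Otimes>\<^sub>M Mx)"
    and Wbar_nonneg: "\<And>n \<omega> x. \<omega> \<in> space (\<Omega> n) \<Longrightarrow> x \<in> space Mx \<Longrightarrow> Wbar n \<omega> x \<ge> 0"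
    and Wbar_consistent:
      "\<And>\<epsilon>. \<epsilon> > 0 \<Longrightarrow>
         (\<lambda>n. emeasure (\<Omega> n) {\<omega> \<in> space (\<Omega> n).
             (\<integral>\<^sup>+ x. ennreal ((Wbar n \<omega> x - w x)\<^sup>2) \<partial>(distr P Mx fst)) > ennreal (\<epsilon>\<^sup>2)})
         \<longlonglongrightarrow> 0"
    and \<alpha>_range: "0 < \<alpha>" "\<alpha> < 1"
    and F_def: "F = (\<lambda>t::real.
         (\<integral>z. w (fst z) * real_cond_exp P (vimage_algebra (space P) fst Mx) Lf z
                * (if s (fst z) \<le> t then 1 else 0) \<partial>P) / (\<integral>z. w (fst z) \<partial>P))"
    and bdd: "bdd_above {t. F t \<le> \<alpha>}"
    and tstar_def: "tstar = Sup {t. F t \<le> \<alpha>}"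
    and F_cont: "isCont F tstar"
    and F_strict: "\<And>t. t < tstar \<Longrightarrow> F t < F tstar" "\<And>t. tstar < t \<Longrightarrow> F tstar < F t"
    and MDR_def: "MDR = (\<lambda>n.
         \<integral>\<^sup>+ (\<omega>, Z). ennreal (Lf (Z n)
            * (if evalue n (\<lambda>i. Wbar n \<omega> (fst (Z i))) (\<lambda>i. Lf (Z i)) (\<lambda>i. s (fst (Z i))) \<alpha>
                  \<ge> ereal (1 / \<alpha>) then 1 else 0))
         \<partial>(\<Omega> n \<Otimes>\<^sub>M (\<Pi>\<^sub>M i\<in>{..n}. if i = n then Q else P)))"
  shows "limsup MDR \<le> ennreal \<alpha>"
proof -
  interpret covariate_shift Mx My P Q w s Lf \<Omega> Wbar \<alpha>
    by (rule covariate_shift.intro[OF P_prob P_sets w_meas w_pos Q_def Q_prob Lf_meas Lf_range s_meas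
          \<Omega>_prob Wbar_meas Wbar_nonneg Wbar_consistent \<alpha>_range])
  have F: "F = shifted_risk"
    using cond_exp_risk_eq_shifted_risk by (simp add: F_def fun_eq_iff)
  have MDR: "MDR = mdr"
    by (simp add: MDR_def mdr_def joint_def data_def fun_eq_iff)
  have "0 \<le> s (fst z)" if "z \<in> space P" for z
    using s_range[OF fst_in_space[OF that]] by simp
  then have "shifted_risk (-1) = 0"
    unfolding shifted_risk_def by (intro integral_eq_zero_AE AE_I2) force
  then have "-1 \<in> {t. F t \<le> \<alpha>}"
    using \<alpha>_range by (simp add: F)
  show ?thesis
  proof (rule ennreal_le_epsilon)
    fix e :: real assume e: "0 < e"
    obtain t where t: "\<alpha> < F t" "F t < \<alpha> + e"
      using exists_value_above_level_near[OF bdd _ _ e] \<open>-1 \<in> {t. F t \<le> \<alpha>}\<close> F_cont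
      unfolding tstar_def by blast
    then have "limsup MDR \<le> ennreal (F t)"
      using limsup_mdr_le by (simp add: F MDR)
    also have "\<dots> \<le> ennreal \<alpha> + ennreal e"
      using t \<alpha>_range e by (simp flip: ennreal_plus)
    finally show "limsup MDR \<le> ennreal \<alpha> + ennreal e" .
  qed
qed

end
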